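(* Let $L$ be a Lie algebra over a field $F$ satisfying an identity \[f(x_0,x_1,\dots,x_{n-1})=[x_0,x_1,\dots,x_{n-1}]+\sum_{1\ne\sigma\in S_{n-1}}\alpha_\sigma[x_0,x_{\sigma(1)},\dots,x_{\sigma(n-1)}]=0,\quad\alpha_\sigma\in F,\] where $n$ is the minimal degree of an identity satisfied by $L$. Let $f_1(x_0,x_2,\dots,x_{n-1})=[x_0,x_2,\dots,x_{n-1}]+\sum_{1\ne\sigma\in S_{n-1},\,\sigma(1)=1}\alpha_\sigma[x_0,x_{\sigma(2)},\dots,x_{\sigma(n-1)}]$. Then for arbitrary elements $a,b_2,\dots,b_{n-1},c\in\tilde L=L\otimes_FE$, \[[f_1(a,b_2,\dots,b_{n-1}),c]\in\sum F[a,b_{i_2},\dots,[b_{i_k},c],\dots,b_{i_{n-1}}],\] where the sum runs over all permutations $i_2,\dots,i_{n-1}$ of $2,\dots,n-1$ and all positions $2\le k\le n-1$.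
   Context: Commutators are left-normed: $[a,b,c,\dots]=[\cdots[[a,b],c],\dots]$. $E$ is the commutative associative $F$-algebra without unit generated by $e_1,e_2,\dots$ with relations $e_i^2=0$, and $\tilde L=L\otimes_FE$ with $[x\otimes\alpha,y\otimes\beta]=[x,y]\otimes\alpha\beta$. *)

theory Defs
  imports Main HOL.Vector_Spaces "HOL-Combinatorics.Permutations" "HOL-Library.Function_Algebras"
begin

locale lie_algebra = vector_space sc
  for sc :: "'f::field \<Rightarrow> 'v::ab_group_add \<Rightarrow> 'v" +
  fixes br :: "'v \<Rightarrow> 'v \<Rightarrow> 'v"
  assumes br_add_left: "br (x + y) z = br x z + br y z"
    and br_add_right: "br x (y + z) = br x y + br x z"
    and br_scale_left: "br (sc c x) y = sc c (br x y)"
    and br_scale_right: "br x (sc c y) = sc c (br x y)"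
    and br_alt: "br x x = 0"
    and jacobi: "br (br x y) z + br (br y z) x + br (br z x) y = 0"

definition lnc :: "('v \<Rightarrow> 'v \<Rightarrow> 'v) \<Rightarrow> 'v \<Rightarrow> 'v list \<Rightarrow> 'v" where
  "lnc br x0 xs = foldl br x0 xs"

definition mlpoly ::
  "('f \<Rightarrow> 'v::comm_monoid_add \<Rightarrow> 'v) \<Rightarrow> ('v \<Rightarrow> 'v \<Rightarrow> 'v) \<Rightarrow> nat \<Rightarrow> ((nat \<Rightarrow> nat) \<Rightarrow> 'f) \<Rightarrow> (nat \<Rightarrow> 'v) \<Rightarrow> 'v"
  where
  "mlpoly sc br m \<beta> x =
     (\<Sum>\<sigma> \<in> {\<sigma>. \<sigma> permutes {1..<m}}. sc (\<beta> \<sigma>) (lnc br (x 0) (map (\<lambda>i. x (\<sigma> i)) [1..<m])))"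

definition satisfies_ml_identity ::
  "('f::zero \<Rightarrow> 'v::comm_monoid_add \<Rightarrow> 'v) \<Rightarrow> ('v \<Rightarrow> 'v \<Rightarrow> 'v) \<Rightarrow> nat \<Rightarrow> ((nat \<Rightarrow> nat) \<Rightarrow> 'f) \<Rightarrow> bool"
  where
  "satisfies_ml_identity sc br m \<beta> \<longleftrightarrow> (\<forall>x. mlpoly sc br m \<beta> x = 0)"

(* The coefficient vector beta is nonzero (as a multilinear Lie polynomial of degree m;
   the left-normed words [x_0, x_sigma(1), ...] form a basis of the multilinear part). *)
definition nonzero_coeffs :: "nat \<Rightarrow> ((nat \<Rightarrow> nat) \<Rightarrow> 'f::zero) \<Rightarrow> bool" where
  "nonzero_coeffs m \<beta> \<longleftrightarrow> (\<exists>\<sigma>. \<sigma> permutes {1..<m} \<and> \<beta> \<sigma> \<noteq> 0)"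

(* E = commutative non-unital algebra generated by e_1,e_2,... with e_i^2 = 0.
   A basis of E is e_S = prod_{i in S} e_i for finite nonempty S \<subseteq> nat, with
   e_S e_T = e_{S \<union> T} if S \<inter> T = {} and 0 otherwise.
   Hence L \<otimes>_F E \<cong> finitely supported functions u : nat set \<Rightarrow> L with
   u S = 0 unless S is finite and nonempty (u = sum_S u(S) \<otimes> e_S). *)
definition ltilde :: "(nat set \<Rightarrow> 'v::zero) set" where
  "ltilde = {u. finite {S. u S \<noteq> 0} \<and> (\<forall>S. u S \<noteq> 0 \<longrightarrow> finite S \<and> S \<noteq> {})}"

definition tsc :: "('f \<Rightarrow> 'v \<Rightarrow> 'v) \<Rightarrow> 'f \<Rightarrow> (nat set \<Rightarrow> 'v) \<Rightarrow> (nat set \<Rightarrow> 'v)" where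
  "tsc sc c u = (\<lambda>S. sc c (u S))"

(* bracket on L~: [x \<otimes> e_T, y \<otimes> e_U] = [x,y] \<otimes> e_T e_U *)
definition tbr :: "('v::comm_monoid_add \<Rightarrow> 'v \<Rightarrow> 'v) \<Rightarrow> (nat set \<Rightarrow> 'v) \<Rightarrow> (nat set \<Rightarrow> 'v) \<Rightarrow> (nat set \<Rightarrow> 'v)"
  where
  "tbr br u v = (\<lambda>S. if finite S then
       (\<Sum>T \<in> {T. T \<subseteq> S \<and> T \<noteq> {} \<and> T \<noteq> S}. br (u T) (v (S - T))) else 0)"

end

theory Submission
  imports Defs
begin

text \<open>The identity is multilinear, so it survives extension of scalars to \<open>E\<close>. Substitute
  \<open>x\<^sub>0 = c\<close>, \<open>x\<^sub>1 = a\<close>, \<open>x\<^sub>i = b\<^sub>i\<close> in it. A term with \<open>\<sigma>(1) = 1\<close> equals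
  \<open>-[[a, c], b\<^bsub>\<sigma>(2)\<^esub>, \<dots>]\<close>, and since \<open>ad c\<close> is a derivation it differs from
  \<open>[[a, b\<^bsub>\<sigma>(2)\<^esub>, \<dots>], c]\<close> by a combination of the words
  \<open>[a, \<dots>, [b\<^sub>i, c], \<dots>]\<close>. Every other term is \<open>-[[b\<^sub>s, c], \<dots>]\<close> with \<open>a\<close> among the
  remaining letters, and repeated use of the Jacobi identity moves \<open>a\<close> to the head, again
  producing such words. Hence \<open>[f\<^sub>1(a, b), c]\<close> lies in their span.\<close>

lemma lnc_Nil [simp]: "lnc f u [] = u"
  by (simp add: lnc_def)

lemma lnc_Cons: "lnc f u (x # xs) = lnc f (f u x) xs"
  by (simp add: lnc_def)

lemma lnc_snoc: "lnc f u (xs @ [x]) = f (lnc f u xs) x"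
  by (simp add: lnc_def)

lemma lnc_append: "lnc f u (xs @ ys) = lnc f (lnc f u xs) ys"
  by (simp add: lnc_def)

text \<open>Anticommutativity rather than \<open>[x, x] = 0\<close>: it is what the bracket of \<open>L \<otimes> E\<close> inherits
  termwise, and it suffices for the argument.\<close>

locale anticomm_jacobi = module sc
  for sc :: "'f::comm_ring_1 \<Rightarrow> 'v::ab_group_add \<Rightarrow> 'v" +
  fixes br :: "'v \<Rightarrow> 'v \<Rightarrow> 'v"
  assumes bracket_add_left: "br (x + y) z = br x z + br y z"
    and bracket_add_right: "br x (y + z) = br x y + br x z"
    and bracket_scale_left: "br (sc c x) y = sc c (br x y)"
    and bracket_scale_right: "br x (sc c y) = sc c (br x y)"
    and bracket_anticomm: "br x y = - br y x"
    and bracket_jacobi: "br (br x y) z + br (br y z) x + br (br z x) y = 0"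

sublocale lie_algebra \<subseteq> anticomm_jacobi sc br
proof
  fix x y
  have "br x x + br y y + (br x y + br y x) = br (x + y) (x + y)"
    by (simp add: br_add_left br_add_right ac_simps)
  then show "br x y = - br y x" by (simp add: br_alt eq_neg_iff_add_eq_0)
qed (simp_all add: br_add_left br_add_right br_scale_left br_scale_right jacobi)

context anticomm_jacobi
begin

lemma bracket_zero_left [simp]: "br 0 y = 0"
  using bracket_add_left[of 0 0 y] by simp

lemma bracket_zero_right [simp]: "br x 0 = 0"
  using bracket_add_right[of x 0 0] by simp

lemma bracket_minus_left: "br (- x) y = - br x y"
  using bracket_add_left[of x "- x" y] by (simp add: add_eq_0_iff)

lemma bracket_diff_left: "br (x - y) z = br x z - br y z"
  by (simp only: diff_conv_add_uminus bracket_add_left bracket_minus_left)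

lemma bracket_sum_left: "br (sum f A) y = (\<Sum>x\<in>A. br (f x) y)"
  by (induction A rule: infinite_finite_induct) (auto simp: bracket_add_left)

lemma bracket_bracket_right: "br v (br w y) = br (br v w) y - br (br v y) w"
proof -
  have "br (br v w) y + br (br w y) v + br (br y v) w = 0" by (rule bracket_jacobi)
  moreover have "br (br w y) v = - br v (br w y)" by (rule bracket_anticomm)
  moreover have "br (br y v) w = - br (br v y) w"
    by (simp add: bracket_anticomm[of y v] bracket_minus_left)
  ultimately show ?thesis by (simp add: algebra_simps eq_neg_iff_add_eq_0)
qed

lemma lnc_add: "lnc br (u + v) xs = lnc br u xs + lnc br v xs"
  by (induction xs arbitrary: u v) (simp_all add: lnc_Cons bracket_add_left)

lemma lnc_scale: "lnc br (sc c u) xs = sc c (lnc br u xs)"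
  by (induction xs arbitrary: u) (simp_all add: lnc_Cons bracket_scale_left)

lemma lnc_minus: "lnc br (- u) xs = - lnc br u xs"
  by (induction xs arbitrary: u) (simp_all add: lnc_Cons bracket_minus_left)

lemma span_additive_image:
  assumes add: "\<And>x y. g (x + y) = g x + g y"
    and scale: "\<And>c x. g (sc c x) = sc c (g x)"
    and gen: "\<And>x. x \<in> S \<Longrightarrow> g x \<in> span T"
    and x: "x \<in> span S"
  shows "g x \<in> span T"
  using x
proof (induction rule: span_induct_alt)
  case base
  have "g 0 = 0" using add[of 0 0] by simp
  then show ?case by (simp add: span_zero)
next
  case (step c x y)
  then show ?case by (simp add: add scale span_add span_scale gen)
qed

lemma bracket_lnc_leibniz:
  "br (lnc br a ys) c - lnc br (br a c) ys
     \<in> span {lnc br a (ys[k := br (ys ! k) c]) | k. k < length ys}"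
proof (induction ys rule: rev_induct)
  case Nil
  then show ?case by (simp add: lnc_Cons span_zero)
next
  case (snoc y ys)
  let ?S = "span {lnc br a ((ys @ [y])[k := br ((ys @ [y]) ! k) c]) | k. k < length (ys @ [y])}"
  have split: "br (lnc br a (ys @ [y])) c - lnc br (br a c) (ys @ [y]) =
      br (br (lnc br a ys) c - lnc br (br a c) ys) y + lnc br a (ys @ [br y c])"
    using bracket_bracket_right[of "lnc br a ys" y c]
    by (simp add: lnc_snoc bracket_diff_left algebra_simps)
  have "br (br (lnc br a ys) c - lnc br (br a c) ys) y \<in> ?S"
  proof (rule span_additive_image[where g = "\<lambda>t. br t y", OF _ _ _ snoc.IH])
    fix t assume "t \<in> {lnc br a (ys[k := br (ys ! k) c]) | k. k < length ys}"
    then obtain k where t: "t = lnc br a (ys[k := br (ys ! k) c])" and k: "k < length ys"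
      by blast
    have "br t y = lnc br a ((ys @ [y])[k := br ((ys @ [y]) ! k) c])"
      using k by (simp add: t lnc_snoc list_update_append nth_append)
    then show "br t y \<in> ?S" using k by (intro span_base) force
  qed (simp_all add: bracket_add_left bracket_scale_left)
  moreover have "lnc br a (ys @ [br y c]) \<in> ?S"
    by (intro span_base CollectI exI[of _ "length ys"]) (simp add: list_update_append)
  ultimately show ?case unfolding split by (rule span_add)
qed

lemma bracket_lnc_in_span_lnc:
  assumes "distinct (z # xs)"
  shows "br v (lnc br (H z) (map H xs))
     \<in> span {lnc br v (map H qs) | qs. distinct qs \<and> set qs = set (z # xs)}"
  using assms
proof (induction xs arbitrary: v rule: rev_induct)
  case Nil
  show ?case by (intro span_base CollectI exI[of _ "[z]"]) (simp add: lnc_Cons)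
next
  case (snoc x xs)
  let ?w = "lnc br (H z) (map H xs)"
  let ?S = "span {lnc br v (map H qs) | qs. distinct qs \<and> set qs = set (z # xs @ [x])}"
  have dist: "distinct (z # xs)" using snoc.prems by simp
  have split: "br v (lnc br (H z) (map H (xs @ [x]))) = br (br v ?w) (H x) - br (br v (H x)) ?w"
    by (simp add: lnc_snoc bracket_bracket_right)
  have "br (br v ?w) (H x) \<in> ?S"
  proof (rule span_additive_image[where g = "\<lambda>t. br t (H x)", OF _ _ _ snoc.IH[OF dist]])
    fix t assume "t \<in> {lnc br v (map H qs) | qs. distinct qs \<and> set qs = set (z # xs)}"
    then obtain qs where "t = lnc br v (map H qs)" "distinct qs" "set qs = set (z # xs)"
      by blast
    then show "br t (H x) \<in> ?S"
      using snoc.prems by (intro span_base CollectI exI[of _ "qs @ [x]"]) (auto simp: lnc_snoc)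
  qed (simp_all add: bracket_add_left bracket_scale_left)
  moreover have "br (br v (H x)) ?w \<in> ?S"
  proof (rule span_mono[THEN subsetD, OF _ snoc.IH[OF dist]])
    show "{lnc br (br v (H x)) (map H qs) | qs. distinct qs \<and> set qs = set (z # xs)}
        \<subseteq> {lnc br v (map H qs) | qs. distinct qs \<and> set qs = set (z # xs @ [x])}"
    proof clarify
      fix qs assume "distinct qs" "set qs = set (z # xs)"
      then show "\<exists>qs'. lnc br (br v (H x)) (map H qs) = lnc br v (map H qs') \<and>
          distinct qs' \<and> set qs' = set (z # xs @ [x])"
        using snoc.prems by (intro exI[of _ "x # qs"]) (auto simp: lnc_Cons)
    qed
  qed
  ultimately show ?case unfolding split by (rule span_diff)
qed

text \<open>Any letter \<open>G p\<close> can be moved to the head of a left-normed commutator; the old head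
  \<open>u\<close> then occurs among the remaining letters, under the fresh index \<open>z\<close>.\<close>

lemma lnc_in_span_lnc_headed:
  assumes dist: "distinct ks" and p: "p \<in> set ks" and z: "z \<notin> set ks"
  shows "lnc br u (map G ks) \<in> span {lnc br (G p) (map (G(z := u)) qs) | qs.
           distinct qs \<and> set qs = insert z (set ks - {p})}"
proof -
  obtain xs ys where ks: "ks = xs @ p # ys" using split_list[OF p] by blast
  let ?H = "G(z := u)"
  let ?S = "span {lnc br (G p) (map ?H qs) | qs. distinct qs \<and> set qs = insert z (set ks - {p})}"
  have unchanged: "map ?H xs = map G xs" "map ?H ys = map G ys" using z ks by auto
  have head: "lnc br u (map G ks) = lnc br (- br (G p) (lnc br (?H z) (map ?H xs))) (map ?H ys)"
    by (simp add: ks lnc_append lnc_Cons unchanged bracket_anticomm[of _ "G p"])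
  have "distinct (z # xs)" using dist z ks by auto
  from this[THEN bracket_lnc_in_span_lnc] show ?thesis unfolding head
  proof (rule span_additive_image[where g = "\<lambda>t. lnc br (- t) (map ?H ys)", rotated 3])
    fix t assume "t \<in> {lnc br (G p) (map ?H qs) | qs. distinct qs \<and> set qs = set (z # xs)}"
    then obtain qs where "t = lnc br (G p) (map ?H qs)" "distinct qs" "set qs = set (z # xs)"
      by blast
    then have "lnc br t (map ?H ys) \<in> ?S"
      using dist z by (intro span_base CollectI exI[of _ "qs @ ys"]) (auto simp: ks lnc_append)
    then show "lnc br (- t) (map ?H ys) \<in> ?S" by (simp add: lnc_minus span_neg)
  qed (simp_all only: minus_add_distrib lnc_add lnc_minus lnc_scale scale_minus_right)
qed

end

section \<open>Extension of scalars to \<open>E\<close>\<close>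

lemma sum_fun_apply: "(\<Sum>i\<in>A. f i) x = (\<Sum>i\<in>A. f i x)"
  by (induction A rule: infinite_finite_induct) auto

lemma sum_Sigma_Pow_PiE_extend:
  assumes "j \<notin> A"
  shows "(\<Sum>(T, d)\<in>Sigma (Pow S) (\<lambda>T. T \<rightarrow>\<^sub>E A). g (\<lambda>s\<in>S. if s \<in> T then d s else j))
    = (\<Sum>d\<in>S \<rightarrow>\<^sub>E insert j A. g d)"
proof (rule sum.reindex_bij_witness[where j = "\<lambda>(T, d). \<lambda>s\<in>S. if s \<in> T then d s else j"
      and i = "\<lambda>d. ({s\<in>S. d s \<noteq> j}, restrict d {s\<in>S. d s \<noteq> j})"])
  fix p assume "p \<in> Sigma (Pow S) (\<lambda>T. T \<rightarrow>\<^sub>E A)"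
  then obtain T d where p: "p = (T, d)" and T: "T \<subseteq> S" and d: "d \<in> T \<rightarrow>\<^sub>E A"
    by blast
  have T_eq: "{s\<in>S. (if s \<in> T then d s else j) \<noteq> j} = T" using T d assms by auto
  show "(case (case p of (T, d) \<Rightarrow> \<lambda>s\<in>S. if s \<in> T then d s else j) of
      d \<Rightarrow> ({s\<in>S. d s \<noteq> j}, restrict d {s\<in>S. d s \<noteq> j})) = p"
    using T d assms by (auto simp: p T_eq restrict_def fun_eq_iff PiE_def extensional_def)
  show "(case p of (T, d) \<Rightarrow> \<lambda>s\<in>S. if s \<in> T then d s else j) \<in> S \<rightarrow>\<^sub>E insert j A"
    using d by (force simp: p)
  show "g (case p of (T, d) \<Rightarrow> \<lambda>s\<in>S. if s \<in> T then d s else j)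
      = (case p of (T, d) \<Rightarrow> g (\<lambda>s\<in>S. if s \<in> T then d s else j))"
    by (simp add: p)
next
  fix d assume "d \<in> S \<rightarrow>\<^sub>E insert j A"
  then show "({s\<in>S. d s \<noteq> j}, restrict d {s\<in>S. d s \<noteq> j}) \<in> Sigma (Pow S) (\<lambda>T. T \<rightarrow>\<^sub>E A)"
    and "(case ({s\<in>S. d s \<noteq> j}, restrict d {s\<in>S. d s \<noteq> j}) of
      (T, d') \<Rightarrow> \<lambda>s\<in>S. if s \<in> T then d' s else j) = d"
    by (auto simp: fun_eq_iff PiE_def extensional_def)
qed

text \<open>Coefficients at \<open>{}\<close> carry no meaning in \<open>L \<otimes> E\<close>, since \<open>E\<close> has no unit. Zeroing them lets
  the bracket sum over all of \<open>Pow S\<close>, and then an iterated bracket evaluated at \<open>S\<close> becomes a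
  sum over all ways to distribute the elements of \<open>S\<close> among its factors.\<close>

definition drop_empty :: "(nat set \<Rightarrow> 'v::zero) \<Rightarrow> nat set \<Rightarrow> 'v" where
  "drop_empty u = u({} := 0)"

definition tbr_pow ::
  "('v::comm_monoid_add \<Rightarrow> 'v \<Rightarrow> 'v) \<Rightarrow> (nat set \<Rightarrow> 'v) \<Rightarrow> (nat set \<Rightarrow> 'v) \<Rightarrow> nat set \<Rightarrow> 'v"
  where "tbr_pow br u v = (\<lambda>S. if finite S then (\<Sum>T\<in>Pow S. br (u T) (v (S - T))) else 0)"

context anticomm_jacobi
begin

lemma tbr_eq_tbr_pow: "tbr br u v = tbr_pow br (drop_empty u) (drop_empty v)"
proof
  fix S
  show "tbr br u v S = tbr_pow br (drop_empty u) (drop_empty v) S"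
  proof (cases "finite S")
    case True
    have "(\<Sum>T\<in>{T. T \<subseteq> S \<and> T \<noteq> {} \<and> T \<noteq> S}. br (u T) (v (S - T)))
        = (\<Sum>T\<in>Pow S. br (drop_empty u T) (drop_empty v (S - T)))"
      using True by (intro sum.mono_neutral_cong_left) (auto simp: drop_empty_def)
    then show ?thesis using True by (simp add: tbr_def tbr_pow_def)
  qed (simp add: tbr_def tbr_pow_def)
qed

lemma drop_empty_tbr [simp]: "drop_empty (tbr br u v) = tbr br u v"
  by (auto simp: drop_empty_def tbr_def)

lemma tbr_tbr: "tbr br (tbr br x y) z = tbr_pow br (tbr_pow br (drop_empty x) (drop_empty y)) (drop_empty z)"
  by (metis drop_empty_tbr tbr_eq_tbr_pow)

lemma lnc_tbr_pow_colourings: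
  assumes "finite S" "distinct (i0 # is)"
  shows "lnc (tbr_pow br) (U i0) (map U is) S =
    (\<Sum>d\<in>S \<rightarrow>\<^sub>E insert i0 (set is).
        lnc br (U i0 {s\<in>S. d s = i0}) (map (\<lambda>i. U i {s\<in>S. d s = i}) is))"
  using assms
proof (induction "is" arbitrary: S rule: rev_induct)
  case Nil
  have "S \<rightarrow>\<^sub>E {i0} = {\<lambda>s\<in>S. i0}"
    using PiE_singleton[of "\<lambda>s\<in>S. i0" S] by simp
  then show ?case by simp
next
  case (snoc j "is")
  define A where "A = insert i0 (set is)"
  have jA: "j \<notin> A" using snoc.prems by (auto simp: A_def)
  have dist: "distinct (i0 # is)" using snoc.prems by simp
  let ?F = "\<lambda>T d. lnc br (U i0 {s\<in>T. d s = i0}) (map (\<lambda>i. U i {s\<in>T. d s = i}) is)"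
  let ?G = "\<lambda>d. lnc br (U i0 {s\<in>S. d s = i0}) (map (\<lambda>i. U i {s\<in>S. d s = i}) (is @ [j]))"
  have "lnc (tbr_pow br) (U i0) (map U (is @ [j])) S
      = (\<Sum>T\<in>Pow S. br (lnc (tbr_pow br) (U i0) (map U is) T) (U j (S - T)))"
    using snoc.prems by (simp add: lnc_snoc tbr_pow_def)
  also have "\<dots> = (\<Sum>T\<in>Pow S. \<Sum>d\<in>T \<rightarrow>\<^sub>E A. br (?F T d) (U j (S - T)))"
  proof (intro sum.cong refl)
    fix T assume "T \<in> Pow S"
    then have "finite T" using snoc.prems finite_subset by auto
    then show "br (lnc (tbr_pow br) (U i0) (map U is) T) (U j (S - T))
        = (\<Sum>d\<in>T \<rightarrow>\<^sub>E A. br (?F T d) (U j (S - T)))"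
      by (simp add: snoc.IH[OF _ dist] bracket_sum_left A_def)
  qed
  also have "\<dots> = (\<Sum>(T, d)\<in>Sigma (Pow S) (\<lambda>T. T \<rightarrow>\<^sub>E A). br (?F T d) (U j (S - T)))"
    using snoc.prems
    by (intro sum.Sigma) (auto intro!: finite_PiE simp: A_def finite_subset)
  also have "\<dots> = (\<Sum>(T, d)\<in>Sigma (Pow S) (\<lambda>T. T \<rightarrow>\<^sub>E A). ?G (\<lambda>s\<in>S. if s \<in> T then d s else j))"
  proof (rule sum.cong[OF refl], clarify)
    fix T d assume T: "T \<subseteq> S" and d: "d \<in> T \<rightarrow>\<^sub>E A"
    define d' where "d' = (\<lambda>s\<in>S. if s \<in> T then d s else j)"
    have blocks: "{s\<in>S. d' s = i} = {s\<in>T. d s = i}" if "i \<in> A" for i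
      using T d jA that by (auto simp: d'_def)
    have "map (\<lambda>i. U i {s\<in>S. d' s = i}) is = map (\<lambda>i. U i {s\<in>T. d s = i}) is"
      and "{s\<in>S. d' s = i0} = {s\<in>T. d s = i0}" and "{s\<in>S. d' s = j} = S - T"
      using blocks T d jA by (auto simp: A_def d'_def)
    then show "br (?F T d) (U j (S - T)) = ?G d'"
      by (simp only: map_append list.map lnc_snoc)
  qed
  also have "\<dots> = (\<Sum>d\<in>S \<rightarrow>\<^sub>E insert j A. ?G d)"
    by (rule sum_Sigma_Pow_PiE_extend[OF jA])
  finally show ?case by (simp add: A_def insert_commute)
qed

lemma tbr_anticomm: "tbr br x y = - tbr br y x"
proof
  fix S
  show "tbr br x y S = (- tbr br y x) S"
  proof (cases "finite S")
    case True
    define U where "U i = (if i = 0 then drop_empty x else drop_empty y)" for i :: nat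
    have "insert (2::nat) (set [0]) = {0, 2}" by auto
    then have yx: "tbr br y x S = (\<Sum>d\<in>S \<rightarrow>\<^sub>E {0::nat, 2}.
        br (drop_empty y {s\<in>S. d s = 2}) (drop_empty x {s\<in>S. d s = 0}))"
      using lnc_tbr_pow_colourings[OF True, of 2 "[0]" U]
      by (simp add: U_def tbr_eq_tbr_pow lnc_Cons)
    have "tbr br x y S = (\<Sum>d\<in>S \<rightarrow>\<^sub>E {0::nat, 2}.
        br (drop_empty x {s\<in>S. d s = 0}) (drop_empty y {s\<in>S. d s = 2}))"
      using lnc_tbr_pow_colourings[OF True, of 0 "[2]" U]
      by (simp add: U_def tbr_eq_tbr_pow lnc_Cons)
    also have "\<dots> = (\<Sum>d\<in>S \<rightarrow>\<^sub>E {0::nat, 2}.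
        - br (drop_empty y {s\<in>S. d s = 2}) (drop_empty x {s\<in>S. d s = 0}))"
      by (intro sum.cong refl bracket_anticomm)
    finally show ?thesis by (simp add: yx sum_negf)
  qed (simp add: tbr_def)
qed

lemma tbr_jacobi:
  "tbr br (tbr br x y) z + tbr br (tbr br y z) x + tbr br (tbr br z x) y = 0"
proof
  fix S
  show "(tbr br (tbr br x y) z + tbr br (tbr br y z) x + tbr br (tbr br z x) y) S = 0 S"
  proof (cases "finite S")
    case True
    define U where
      "U i = (if i = 0 then drop_empty x else if i = 2 then drop_empty y else drop_empty z)"
      for i :: nat
    let ?B = "\<lambda>d i. {s\<in>S. d s = (i::nat)}"
    have "insert (0::nat) (set [2, 3]) = {0, 2, 3}" "insert (2::nat) (set [3, 0]) = {0, 2, 3}"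
      "insert (3::nat) (set [0, 2]) = {0, 2, 3}" by auto
    then have "tbr br (tbr br x y) z S = (\<Sum>d\<in>S \<rightarrow>\<^sub>E {0::nat, 2, 3}.
          br (br (drop_empty x (?B d 0)) (drop_empty y (?B d 2))) (drop_empty z (?B d 3)))"
      and "tbr br (tbr br y z) x S = (\<Sum>d\<in>S \<rightarrow>\<^sub>E {0::nat, 2, 3}.
          br (br (drop_empty y (?B d 2)) (drop_empty z (?B d 3))) (drop_empty x (?B d 0)))"
      and "tbr br (tbr br z x) y S = (\<Sum>d\<in>S \<rightarrow>\<^sub>E {0::nat, 2, 3}.
          br (br (drop_empty z (?B d 3)) (drop_empty x (?B d 0))) (drop_empty y (?B d 2)))"
      using lnc_tbr_pow_colourings[OF True, of 0 "[2, 3]" U]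
        lnc_tbr_pow_colourings[OF True, of 2 "[3, 0]" U]
        lnc_tbr_pow_colourings[OF True, of 3 "[0, 2]" U]
      by (simp_all add: U_def tbr_tbr lnc_Cons)
    then show ?thesis by (simp add: sum.distrib[symmetric] bracket_jacobi)
  qed (simp add: tbr_def)
qed

lemma tilde_anticomm_jacobi: "anticomm_jacobi (tsc sc) (tbr br)"
proof
  fix x y z :: "nat set \<Rightarrow> 'v"
  show "tbr br x y = - tbr br y x" by (rule tbr_anticomm)
  show "tbr br (tbr br x y) z + tbr br (tbr br y z) x + tbr br (tbr br z x) y = 0"
    by (rule tbr_jacobi)
qed (simp_all add: tsc_def tbr_def fun_eq_iff scale_right_distrib scale_left_distrib
      bracket_add_left bracket_add_right bracket_scale_left bracket_scale_right sum.distrib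
      scale_sum_right)

lemma drop_empty_lnc_tbr:
  "drop_empty (lnc (tbr br) u xs) = lnc (tbr_pow br) (drop_empty u) (map drop_empty xs)"
proof (induction xs rule: rev_induct)
  case (snoc x xs)
  have "drop_empty (lnc (tbr br) u (xs @ [x])) = tbr br (lnc (tbr br) u xs) x"
    by (simp add: lnc_snoc)
  also have "\<dots> = tbr_pow br (lnc (tbr_pow br) (drop_empty u) (map drop_empty xs)) (drop_empty x)"
    by (simp only: tbr_eq_tbr_pow snoc.IH)
  finally show ?case by (simp only: map_append list.map lnc_snoc[of "tbr_pow br"])
qed simp

lemma lnc_tbr_eq_lnc_tbr_pow:
  assumes "xs \<noteq> []"
  shows "lnc (tbr br) u xs = lnc (tbr_pow br) (drop_empty u) (map drop_empty xs)"
proof -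
  obtain ys y where "xs = ys @ [y]" using assms rev_exhaust by blast
  then have "lnc (tbr br) u xs = drop_empty (lnc (tbr br) u xs)" by (simp add: lnc_snoc)
  then show ?thesis by (simp add: drop_empty_lnc_tbr)
qed

lemma lnc_tbr_infinite:
  assumes "xs \<noteq> []" "infinite S"
  shows "lnc (tbr br) u xs S = 0"
proof -
  obtain ys y where "xs = ys @ [y]" using assms(1) rev_exhaust by blast
  then show ?thesis using assms(2) by (simp add: lnc_snoc tbr_def)
qed

lemma lnc_tbr_permuted_colourings:
  assumes S: "finite S" and \<sigma>: "\<sigma> permutes {1..<n}" and n: "1 < n"
  shows "lnc (tbr br) (X 0) (map (\<lambda>i. X (\<sigma> i)) [1..<n]) S =
    (\<Sum>d\<in>S \<rightarrow>\<^sub>E {0..<n}. lnc br (drop_empty (X 0) {s\<in>S. d s = 0})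
        (map (\<lambda>i. drop_empty (X (\<sigma> i)) {s\<in>S. d s = \<sigma> i}) [1..<n]))"
proof -
  define U where "U i = drop_empty (X i)" for i
  have img: "\<sigma> ` {1..<n} = {1..<n}" by (rule permutes_image[OF \<sigma>])
  have "distinct (0 # map \<sigma> [1..<n])"
    using img permutes_inj[OF \<sigma>] by (auto simp: distinct_map inj_on_def)
  moreover have "insert 0 (set (map \<sigma> [1..<n])) = {0..<n}" using img n by auto
  moreover have "lnc (tbr br) (X 0) (map (\<lambda>i. X (\<sigma> i)) [1..<n]) S
      = lnc (tbr_pow br) (U 0) (map U (map \<sigma> [1..<n])) S"
    using n by (simp add: lnc_tbr_eq_lnc_tbr_pow U_def o_def)
  ultimately show ?thesis using lnc_tbr_pow_colourings[OF S, of 0 "map \<sigma> [1..<n]" U]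
    by (simp add: U_def o_def)
qed

text \<open>At a finite \<open>S\<close> both sides of the identity in \<open>L \<otimes> E\<close> expand over the same colourings
  of \<open>S\<close>, and for each colouring the identity of \<open>L\<close> applies to the coefficients.\<close>

lemma satisfies_ml_identity_tilde:
  assumes "satisfies_ml_identity sc br n \<alpha>"
  shows "satisfies_ml_identity (tsc sc) (tbr br) n \<alpha>"
  unfolding satisfies_ml_identity_def
proof (intro allI ext)
  fix X :: "nat \<Rightarrow> nat set \<Rightarrow> 'v" and S
  let ?P = "{\<sigma>. \<sigma> permutes {1..<n}}"
  let ?word = "\<lambda>\<sigma>. lnc (tbr br) (X 0) (map (\<lambda>i. X (\<sigma> i)) [1..<n])"
  have ident: "mlpoly sc br n \<alpha> x = 0" for x
    using assms by (simp add: satisfies_ml_identity_def)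
  have "mlpoly (tsc sc) (tbr br) n \<alpha> X S = (\<Sum>\<sigma>\<in>?P. sc (\<alpha> \<sigma>) (?word \<sigma> S))"
    by (simp add: mlpoly_def sum_fun_apply tsc_def)
  also have "\<dots> = 0"
  proof (cases "1 < n")
    case False
    then have "(\<Sum>\<sigma>\<in>?P. sc (\<alpha> \<sigma>) (?word \<sigma> S)) = mlpoly sc br n \<alpha> (\<lambda>i. X i S)"
      by (simp add: mlpoly_def)
    then show ?thesis by (simp add: ident)
  next
    case n: True
    show ?thesis
    proof (cases "finite S")
      case True
      let ?Y = "\<lambda>d i. drop_empty (X i) {s\<in>S. d s = i}"
      have "(\<Sum>\<sigma>\<in>?P. sc (\<alpha> \<sigma>) (?word \<sigma> S))
          = (\<Sum>\<sigma>\<in>?P. \<Sum>d\<in>S \<rightarrow>\<^sub>E {0..<n}. sc (\<alpha> \<sigma>) (lnc br (?Y d 0) (map (\<lambda>i. ?Y d (\<sigma> i)) [1..<n])))"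
        using lnc_tbr_permuted_colourings[OF True _ n]
        by (intro sum.cong refl) (simp add: scale_sum_right)
      also have "\<dots> = (\<Sum>d\<in>S \<rightarrow>\<^sub>E {0..<n}. mlpoly sc br n \<alpha> (?Y d))"
        unfolding mlpoly_def by (rule sum.swap)
      finally show ?thesis by (simp add: ident)
    qed (use n in \<open>simp add: lnc_tbr_infinite\<close>)
  qed
  finally show "mlpoly (tsc sc) (tbr br) n \<alpha> X S = 0 S" by simp
qed

end

section \<open>Words with one letter bracketed with \<open>c\<close>\<close>

lemma permutes_image_remove:
  assumes "\<sigma> permutes A"
  shows "\<sigma> ` (A - {x}) = A - {\<sigma> x}"
proof -
  have "\<sigma> ` (A - {x}) = \<sigma> ` A - \<sigma> ` {x}"
    by (rule inj_on_image_set_diff[OF permutes_inj[OF assms]]) simp_all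
  then show ?thesis using permutes_image[OF assms] by simp
qed

definition slot_words :: "('v \<Rightarrow> 'v \<Rightarrow> 'v) \<Rightarrow> nat \<Rightarrow> 'v \<Rightarrow> (nat \<Rightarrow> 'v) \<Rightarrow> 'v \<Rightarrow> 'v set" where
  "slot_words br n a b c =
     {lnc br a (map (\<lambda>j. if j = k then br (b (\<pi> j)) c else b (\<pi> j)) [2..<n])
      | \<pi> k. \<pi> permutes {2..<n} \<and> k \<in> {2..<n}}"

lemma distinct_list_eq_permuted_upt_update:
  fixes qs :: "nat list"
  assumes s: "s \<in> {m..<n}" and z: "z \<notin> {m..<n}"
    and dist: "distinct qs" and set_qs: "set qs = insert z ({m..<n} - {s})"
  shows "\<exists>\<pi> k. \<pi> permutes {m..<n} \<and> k \<in> {m..<n} \<and> \<pi> k = s \<and>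
           qs = map (\<lambda>j. if j = k then z else \<pi> j) [m..<n]"
proof -
  have "card (set qs) = n - m"
    using s z unfolding set_qs by (simp add: card_insert_if) arith
  then have len: "length qs = n - m" using distinct_card[OF dist] by simp
  obtain k0 where k0: "k0 < length qs" "qs ! k0 = z"
    using set_qs by (metis insertI1 in_set_conv_nth)
  define r where "r q = (if q = z then s else q)" for q
  define \<pi> where "\<pi> j = (if j \<in> {m..<n} then r (qs ! (j - m)) else j)" for j
  have r_inj: "inj_on r (set qs)"
    using set_qs by (auto simp: inj_on_def r_def)
  have r_range: "r q \<in> {m..<n}" if "q \<in> set qs" for q
    using that set_qs s by (auto simp: r_def)
  have index: "j - m < length qs" if "j \<in> {m..<n}" for j
    using that len by auto
  have inj: "inj_on \<pi> {m..<n}"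
  proof (rule inj_onI)
    fix x y assume xy: "x \<in> {m..<n}" "y \<in> {m..<n}" "\<pi> x = \<pi> y"
    then have "qs ! (x - m) = qs ! (y - m)"
      using inj_onD[OF r_inj] index by (simp add: \<pi>_def)
    then have "x - m = y - m" using nth_eq_iff_index_eq[OF dist] index xy(1,2) by blast
    then show "x = y" using xy(1,2) by auto
  qed
  have "\<pi> ` {m..<n} \<subseteq> {m..<n}"
    using r_range index by (auto simp: \<pi>_def)
  then have "bij_betw \<pi> {m..<n} {m..<n}"
    using endo_inj_surj[OF finite_atLeastLessThan _ inj] inj by (simp add: bij_betw_def)
  then have "\<pi> permutes {m..<n}"
    by (rule bij_imp_permutes) (auto simp: \<pi>_def)
  moreover have "k0 + m \<in> {m..<n}" and "\<pi> (k0 + m) = s"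
    using k0 len by (auto simp: \<pi>_def r_def)
  moreover have "qs = map (\<lambda>j. if j = k0 + m then z else \<pi> j) [m..<n]"
  proof (rule nth_equalityI)
    fix i assume i: "i < length qs"
    show "qs ! i = map (\<lambda>j. if j = k0 + m then z else \<pi> j) [m..<n] ! i"
    proof (cases "i = k0")
      case False
      then have "qs ! i \<noteq> z" using nth_eq_iff_index_eq[OF dist i k0(1)] k0(2) by simp
      then show ?thesis using i len False by (auto simp: \<pi>_def r_def)
    qed (use i len k0 in simp)
  qed (simp add: len)
  ultimately show ?thesis by blast
qed

lemma lnc_in_slot_words:
  assumes s: "s \<in> {2..<n}" and dist: "distinct qs" and set_qs: "set qs = insert 0 ({2..<n} - {s})"
    and H: "\<forall>q\<in>{2..<n}. H q = b q" "H 0 = br (b s) c"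
  shows "lnc br a (map H qs) \<in> slot_words br n a b c"
proof -
  obtain \<pi> k where \<pi>: "\<pi> permutes {2..<n}" and k: "k \<in> {2..<n}" "\<pi> k = s"
    and qs: "qs = map (\<lambda>j. if j = k then 0 else \<pi> j) [2..<n]"
    using distinct_list_eq_permuted_upt_update[OF s _ dist set_qs] by auto
  have "map H qs = map (\<lambda>j. if j = k then br (b (\<pi> j)) c else b (\<pi> j)) [2..<n]"
    using H k permutes_in_image[OF \<pi>] by (auto simp: qs)
  then show ?thesis
    using \<pi> k unfolding slot_words_def by (intro CollectI exI[of _ \<pi>] exI[of _ k]) simp
qed

context anticomm_jacobi
begin

lemma leibniz_word_in_span_slot_words:
  assumes "\<pi> permutes {2..<n}"
  shows "br (lnc br a (map (\<lambda>i. b (\<pi> i)) [2..<n])) c - lnc br (br a c) (map (\<lambda>i. b (\<pi> i)) [2..<n])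
           \<in> span (slot_words br n a b c)"
  using bracket_lnc_leibniz
proof (rule span_mono[THEN subsetD, rotated])
  let ?ys = "map (\<lambda>i. b (\<pi> i)) [2..<n]"
  show "{lnc br a (?ys[k := br (?ys ! k) c]) | k. k < length ?ys} \<subseteq> slot_words br n a b c"
  proof clarify
    fix k assume "k < length ?ys"
    then have "?ys[k := br (?ys ! k) c] = map (\<lambda>j. if j = k + 2 then br (b (\<pi> j)) c else b (\<pi> j)) [2..<n]"
      by (intro nth_equalityI) (auto simp: nth_list_update)
    then show "lnc br a (?ys[k := br (?ys ! k) c]) \<in> slot_words br n a b c"
      using assms \<open>k < length ?ys\<close> unfolding slot_words_def
      by (intro CollectI exI[of _ \<pi>] exI[of _ "k + 2"]) simp
  qed
qed

lemma moved_word_in_span_slot_words: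
  assumes s: "s \<in> {2..<n}" and dist: "distinct ks" and set_ks: "set ks = {1..<n} - {s}"
    and X: "\<forall>i\<in>{2..<n}. X i = b i" "X 1 = a"
  shows "lnc br (br (b s) c) (map X ks) \<in> span (slot_words br n a b c)"
proof (rule span_mono[THEN subsetD, OF _ lnc_in_span_lnc_headed[OF dist, where p = 1 and z = 0]])
  show "1 \<in> set ks" "0 \<notin> set ks" using set_ks s by simp_all
  have "{1..<n} - {1} = {2..<n}" by auto
  then have rest: "set ks - {1} = {2..<n} - {s}" using set_ks by blast
  show "{lnc br (X 1) (map (X(0 := br (b s) c)) qs) | qs.
      distinct qs \<and> set qs = insert 0 (set ks - {1})} \<subseteq> slot_words br n a b c"
  proof clarify
    fix qs assume "distinct qs" "set qs = insert 0 (set ks - {1})"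
    then show "lnc br (X 1) (map (X(0 := br (b s) c)) qs) \<in> slot_words br n a b c"
      unfolding X(2) rest using X(1) by (intro lnc_in_slot_words[OF s]) simp_all
  qed
qed

lemma lnc_Cons_swap: "lnc br c (x # xs) = - lnc br (br x c) xs"
  by (simp add: lnc_Cons bracket_anticomm[of c] lnc_minus)

lemma permuted_word_fixing_first_in_span_slot_words:
  assumes \<sigma>: "\<sigma> permutes {1..<n}" "\<sigma> 1 = 1" and n: "2 \<le> n"
    and X: "X 1 = a" "\<forall>i\<in>{2..<n}. X i = b i"
  shows "br (lnc br a (map (\<lambda>i. b (\<sigma> i)) [2..<n])) c + lnc br c (map (\<lambda>i. X (\<sigma> i)) [1..<n])
           \<in> span (slot_words br n a b c)"
proof -
  have "\<sigma> permutes {2..<n}"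
  proof (rule permutes_superset[OF \<sigma>(1)])
    show "\<sigma> x = x" if "x \<in> {1..<n} - {2..<n}" for x
      using that \<sigma>(2) by (cases "x = 1") auto
  qed
  moreover have args: "map (\<lambda>i. X (\<sigma> i)) [2..<n] = map (\<lambda>i. b (\<sigma> i)) [2..<n]"
    using X(2) permutes_in_image[OF calculation] by simp
  moreover have upt: "[1..<n] = 1 # [2..<n]"
    using n upt_conv_Cons[of 1 n] by (simp add: numeral_2_eq_2)
  ultimately show ?thesis
    using leibniz_word_in_span_slot_words[of \<sigma> n a b c]
    unfolding upt list.map \<sigma>(2) X(1) args lnc_Cons_swap by simp
qed

lemma permuted_word_moving_first_in_span_slot_words:
  assumes \<sigma>: "\<sigma> permutes {1..<n}" "\<sigma> 1 \<noteq> 1" and n: "2 \<le> n"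
    and X: "X 1 = a" "\<forall>i\<in>{2..<n}. X i = b i"
  shows "lnc br c (map (\<lambda>i. X (\<sigma> i)) [1..<n]) \<in> span (slot_words br n a b c)"
proof -
  have "\<sigma> 1 \<in> {1..<n}" using n permutes_in_image[OF \<sigma>(1)] by simp
  then have s: "\<sigma> 1 \<in> {2..<n}" using \<sigma>(2) by auto
  have "{2..<n} = {1..<n} - {1}" by auto
  then have "distinct (map \<sigma> [2..<n])" and "set (map \<sigma> [2..<n]) = {1..<n} - {\<sigma> 1}"
    using permutes_inj_on[OF \<sigma>(1)] permutes_image_remove[OF \<sigma>(1), of 1] n
    by (auto simp: distinct_map intro: inj_on_subset)
  then have "lnc br (br (b (\<sigma> 1)) c) (map X (map \<sigma> [2..<n])) \<in> span (slot_words br n a b c)"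
    using s X by (intro moved_word_in_span_slot_words) simp_all
  moreover have "[1..<n] = 1 # [2..<n]"
    using n upt_conv_Cons[of 1 n] by (simp add: numeral_2_eq_2)
  ultimately show ?thesis using s X(2) by (simp add: lnc_Cons_swap span_neg o_def)
qed

lemma ml_identity_bracket_in_span_slot_words:
  assumes ident: "satisfies_ml_identity sc br n \<alpha>" and n: "2 \<le> n"
  shows "br (\<Sum>\<sigma>\<in>{\<sigma>. \<sigma> permutes {1..<n} \<and> \<sigma> 1 = 1}.
             sc (\<alpha> \<sigma>) (lnc br a (map (\<lambda>i. b (\<sigma> i)) [2..<n]))) c
           \<in> span (slot_words br n a b c)"
proof -
  define X where "X i = (if i = 0 then c else if i = 1 then a else b i)" for i
  define P where "P = {\<sigma>. \<sigma> permutes {1..<n}}"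
  define P1 where "P1 = {\<sigma>. \<sigma> permutes {1..<n} \<and> \<sigma> 1 = 1}"
  define word where "word \<sigma> = lnc br a (map (\<lambda>i. b (\<sigma> i)) [2..<n])" for \<sigma> :: "nat \<Rightarrow> nat"
  define W where "W \<sigma> = lnc br c (map (\<lambda>i. X (\<sigma> i)) [1..<n])" for \<sigma> :: "nat \<Rightarrow> nat"
  have X: "X 1 = a" "\<forall>i\<in>{2..<n}. X i = b i" by (simp_all add: X_def)
  have P1_P: "P1 \<subseteq> P" and fin: "finite P"
    by (auto simp: P_def P1_def finite_permutations)
  have "mlpoly sc br n \<alpha> X = 0" and "X 0 = c"
    using ident by (simp_all add: satisfies_ml_identity_def X_def)
  then have "(\<Sum>\<sigma>\<in>P. sc (\<alpha> \<sigma>) (W \<sigma>)) = 0"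
    by (simp only: mlpoly_def P_def W_def)
  then have "(\<Sum>\<sigma>\<in>P1. sc (\<alpha> \<sigma>) (W \<sigma>)) + (\<Sum>\<sigma>\<in>P - P1. sc (\<alpha> \<sigma>) (W \<sigma>)) = 0"
    using sum.subset_diff[OF P1_P fin, of "\<lambda>\<sigma>. sc (\<alpha> \<sigma>) (W \<sigma>)"] by (simp add: add.commute)
  then have split: "br (\<Sum>\<sigma>\<in>P1. sc (\<alpha> \<sigma>) (word \<sigma>)) c
      = (\<Sum>\<sigma>\<in>P1. sc (\<alpha> \<sigma>) (br (word \<sigma>) c + W \<sigma>)) + (\<Sum>\<sigma>\<in>P - P1. sc (\<alpha> \<sigma>) (W \<sigma>))"
    by (simp add: bracket_sum_left bracket_scale_left scale_right_distrib sum.distrib add.assoc)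
  have "(\<Sum>\<sigma>\<in>P1. sc (\<alpha> \<sigma>) (br (word \<sigma>) c + W \<sigma>)) \<in> span (slot_words br n a b c)"
    using permuted_word_fixing_first_in_span_slot_words[OF _ _ n X]
    by (intro span_sum span_scale) (simp add: P1_def word_def W_def)
  moreover have "(\<Sum>\<sigma>\<in>P - P1. sc (\<alpha> \<sigma>) (W \<sigma>)) \<in> span (slot_words br n a b c)"
    using permuted_word_moving_first_in_span_slot_words[OF _ _ n X]
    by (intro span_sum span_scale) (simp add: P_def P1_def W_def)
  ultimately show ?thesis
    unfolding P1_def[symmetric] word_def[symmetric] split by (rule span_add)
qed

end

theorem lemma27:
  fixes sc :: "'f::field \<Rightarrow> 'v::ab_group_add \<Rightarrow> 'v"
    and br :: "'v \<Rightarrow> 'v \<Rightarrow> 'v"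
    and n :: nat
    and \<alpha> :: "(nat \<Rightarrow> nat) \<Rightarrow> 'f"
    and a c :: "nat set \<Rightarrow> 'v"
    and b :: "nat \<Rightarrow> nat set \<Rightarrow> 'v"
  assumes L: "lie_algebra sc br"
    and n2: "2 \<le> n"
    and alpha_id: "\<alpha> id = 1"
    and f_identity: "satisfies_ml_identity sc br n \<alpha>"
    and minimal: "\<forall>m \<beta>. 1 \<le> m \<and> m < n \<and> nonzero_coeffs m \<beta> \<longrightarrow>
                         \<not> satisfies_ml_identity sc br m \<beta>"
    and a_in: "a \<in> ltilde"
    and b_in: "\<forall>i \<in> {2..<n}. b i \<in> ltilde"
    and c_in: "c \<in> ltilde"
  shows "tbr br
           (\<Sum>\<sigma> \<in> {\<sigma>. \<sigma> permutes {1..<n} \<and> \<sigma> 1 = 1}.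
              tsc sc (\<alpha> \<sigma>) (lnc (tbr br) a (map (\<lambda>i. b (\<sigma> i)) [2..<n])))
           c
         \<in> module.span (tsc sc)
             {lnc (tbr br) a (map (\<lambda>j. if j = k then tbr br (b (\<pi> j)) c else b (\<pi> j)) [2..<n])
              | \<pi> k. \<pi> permutes {2..<n} \<and> k \<in> {2..<n}}"
proof -
  interpret lie_algebra sc br by (rule L)
  interpret tilde: anticomm_jacobi "tsc sc" "tbr br" by (rule tilde_anticomm_jacobi)
  show ?thesis
    using tilde.ml_identity_bracket_in_span_slot_words[OF satisfies_ml_identity_tilde[OF f_identity] n2]
    by (simp only: slot_words_def)
qed

end
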